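(* Realize $T^*S^{n-1}=\{(\gamma,p)\in\mathbb R^{2n}:\langle\gamma,\gamma\rangle=1,\ \langle\gamma,p\rangle=0\}$ via the Legendre transformation $p=-\frac1{\varepsilon^2}\mathbf I(\gamma\wedge\dot\gamma)\gamma$, let $\dot\gamma=X_\gamma(\gamma,p)$ be its inverse and $h(\gamma,p)=\frac12\langle X_\gamma(\gamma,p),p\rangle$. Then the reduced equations of the rolling of a ball with a gyroscope over a sphere without slipping and twisting (i.e. $\delta l-\mathbf{JK}(\dot\gamma,\delta\gamma)=\mathbf f(\dot\gamma,\delta\gamma)$ for all $\delta\gamma\in T_\gamma S^{n-1}$) take on $T^*S^{n-1}$ the form $$\dot\gamma=X_\gamma(\gamma,p),\qquad \dot p=\frac{1-\varepsilon}{\varepsilon^3}\mathbf I(\gamma\wedge X_\gamma)X_\gamma+\frac1{\varepsilon^2}\kappa X_\gamma+\mu\gamma,$$ where $$\mu=\frac{\varepsilon-1}{\varepsilon^3}\langle\mathbf I(\gamma\wedge X_\gamma)X_\gamma,\gamma\rangle-2h(\gamma,p)+\frac1{\varepsilon^2}\langle X_\gamma,\kappa\gamma\rangle.$$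
   Context: Fix $n\ge3$, ball radius $a$, mass $m$, $D=ma^2$, sphere radius $b$, and $\varepsilon=b/(b+a)$ or $\varepsilon=b/(b-a)$. On $so(n)$ use $\langle X,Y\rangle=-\frac12\operatorname{tr}(XY)$; on $\mathbb R^n$ the Euclidean product. For $x,y\in\mathbb R^n$, $x\wedge y=xy^T-yx^T$. $\mathbf I=\mathbb I+D\,\mathrm{Id}_{so(n)}$ is a symmetric positive definite operator on $so(n)$, $\kappa\in so(n)$ fixed. Reduced Lagrangian $l(\gamma,\dot\gamma)=-\frac1{2\varepsilon^2}\langle\mathbf I(\gamma\wedge\dot\gamma)\gamma,\dot\gamma\rangle$ on $TS^{n-1}$, $\delta l=\langle\frac{\partial l}{\partial\gamma}-\frac d{dt}\frac{\partial l}{\partial\dot\gamma},\delta\gamma\rangle$, $\mathbf{JK}(\dot\gamma,\delta\gamma)=\frac{2\varepsilon-1}{\varepsilon^3}\langle\mathbf I(\gamma\wedge\dot\gamma)\dot\gamma,\delta\gamma\rangle$, $\mathbf f(\dot\gamma,\delta\gamma)=\frac1{\varepsilon^2}\langle\dot\gamma,\kappa\delta\gamma\rangle$. *)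

theory Defs
  imports "HOL-Analysis.Analysis"
begin

definition so_n :: "(real^'n^'n) set" where
  "so_n = {X. transpose X = - X}"

definition so_inner :: "real^'n^'n \<Rightarrow> real^'n^'n \<Rightarrow> real" where
  "so_inner X Y = - (1/2) * trace (X ** Y)"

definition wedge :: "real^'n \<Rightarrow> real^'n \<Rightarrow> real^'n^'n" where
  "wedge x y = (\<chi> i j. x$i * y$j - y$i * x$j)"

text \<open>Symmetric positive definite operator on so(n) (given as a map on all matrices,
 only its restriction to so(n) matters).\<close>
definition sym_pos_def_so :: "(real^'n^'n \<Rightarrow> real^'n^'n) \<Rightarrow> bool" where
  "sym_pos_def_so A \<longleftrightarrow>
     (\<forall>X\<in>so_n. A X \<in> so_n) \<and>
     (\<forall>X\<in>so_n. \<forall>Y\<in>so_n. A (X + Y) = A X + A Y) \<and>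
     (\<forall>X\<in>so_n. \<forall>c. A (c *\<^sub>R X) = c *\<^sub>R A X) \<and>
     (\<forall>X\<in>so_n. \<forall>Y\<in>so_n. so_inner (A X) Y = so_inner X (A Y)) \<and>
     (\<forall>X\<in>so_n. X \<noteq> 0 \<longrightarrow> so_inner (A X) X > 0)"

text \<open>Reduced Lagrangian l(gamma, gammadot) (natural extension to R^n x R^n).\<close>
definition red_lag :: "(real^'n^'n \<Rightarrow> real^'n^'n) \<Rightarrow> real \<Rightarrow> real^'n \<Rightarrow> real^'n \<Rightarrow> real" where
  "red_lag Ib eps g v = - (1 / (2 * eps^2)) * ((Ib (wedge g v) *v g) \<bullet> v)"

definition grad :: "(real^'n \<Rightarrow> real) \<Rightarrow> real^'n \<Rightarrow> real^'n" where
  "grad f x = (\<chi> i. frechet_derivative f (at x) (axis i 1))"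

definition delta_l :: "(real^'n^'n \<Rightarrow> real^'n^'n) \<Rightarrow> real \<Rightarrow> (real \<Rightarrow> real^'n) \<Rightarrow> (real \<Rightarrow> real^'n)
     \<Rightarrow> real \<Rightarrow> real^'n \<Rightarrow> real" where
  "delta_l Ib eps g g' t dg =
     (grad (\<lambda>x. red_lag Ib eps x (g' t)) (g t)
      - vector_derivative (\<lambda>s. grad (\<lambda>v. red_lag Ib eps (g s) v) (g' s)) (at t)) \<bullet> dg"

definition JK :: "(real^'n^'n \<Rightarrow> real^'n^'n) \<Rightarrow> real \<Rightarrow> real^'n \<Rightarrow> real^'n \<Rightarrow> real^'n \<Rightarrow> real" where
  "JK Ib eps g v dg = ((2 * eps - 1) / eps^3) * ((Ib (wedge g v) *v v) \<bullet> dg)"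

definition force :: "real^'n^'n \<Rightarrow> real \<Rightarrow> real^'n \<Rightarrow> real^'n \<Rightarrow> real" where
  "force kappa eps v dg = (1 / eps^2) * (v \<bullet> (kappa *v dg))"

definition legendre :: "(real^'n^'n \<Rightarrow> real^'n^'n) \<Rightarrow> real \<Rightarrow> real^'n \<Rightarrow> real^'n \<Rightarrow> real^'n" where
  "legendre Ib eps g v = - (1 / eps^2) *\<^sub>R (Ib (wedge g v) *v g)"

definition Xgam :: "(real^'n^'n \<Rightarrow> real^'n^'n) \<Rightarrow> real \<Rightarrow> real^'n \<Rightarrow> real^'n \<Rightarrow> real^'n" where
  "Xgam Ib eps g p = (THE v. v \<bullet> g = 0 \<and> legendre Ib eps g v = p)"

definition ham :: "(real^'n^'n \<Rightarrow> real^'n^'n) \<Rightarrow> real \<Rightarrow> real^'n \<Rightarrow> real^'n \<Rightarrow> real" where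
  "ham Ib eps g p = (1/2) * (Xgam Ib eps g p \<bullet> p)"

end

theory Submission
  imports Defs
begin

(* The partial gradients of l are I(gamma ^ gamma') gamma' / eps^2 in gamma and the momentum p
   in gamma', so the residual delta l - JK - f is the linear form <W, .> with
   W = (1 - eps)/eps^3 I(gamma ^ gamma') gamma' + kappa gamma' / eps^2 - p'.
   It vanishes on the tangent space iff W is a multiple of gamma, and that multiple is -mu,
   because differentiating <p, gamma> = 0 gives <p', gamma> = -<p, gamma'> = -2h.
   Positive definiteness of I makes the Legendre map injective on tangent vectors,
   hence X_gamma(gamma, p) = gamma'. *)

lemma wedge_in_so_n: "wedge x y \<in> so_n"
  by (simp add: so_n_def wedge_def transpose_def vec_eq_iff)

lemma wedge_add_left: "wedge (x + z) y = wedge x y + wedge z y"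
  and wedge_add_right: "wedge x (y + z) = wedge x y + wedge x z"
  and wedge_scaleR_left: "wedge (c *\<^sub>R x) y = c *\<^sub>R wedge x y"
  and wedge_scaleR_right: "wedge x (c *\<^sub>R y) = c *\<^sub>R wedge x y"
  by (simp_all add: wedge_def vec_eq_iff algebra_simps)

lemma wedge_mult_vec: "wedge x y *v z = (y \<bullet> z) *\<^sub>R x - (x \<bullet> z) *\<^sub>R y"
  by (simp add: wedge_def matrix_vector_mult_def vec_eq_iff inner_vec_def sum_distrib_left
      sum_distrib_right sum_subtractf algebra_simps)

lemma so_n_mult_vec_inner_swap:
  assumes "A \<in> so_n" shows "(A *v x) \<bullet> y = - ((A *v y) \<bullet> x)"
proof -
  have "(A *v x) \<bullet> y = (transpose A *v y) \<bullet> x"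
    by (metis dot_lmul_matrix inner_commute transpose_matrix_vector)
  also have "\<dots> = - ((A *v y) \<bullet> x)"
  proof -
    have "(- A) *v y = - (A *v y)"
      by (simp add: matrix_vector_mult_def vec_eq_iff sum_negf)
    then show ?thesis
      using assms by (simp add: so_n_def)
  qed
  finally show ?thesis .
qed

lemma so_n_mult_vec_inner_self: "A \<in> so_n \<Longrightarrow> (A *v x) \<bullet> x = 0"
  using so_n_mult_vec_inner_swap[of A x x] by simp

lemma trace_mult_wedge: "trace (A ** wedge x y) = (A *v x) \<bullet> y - (A *v y) \<bullet> x"
  by (simp add: trace_def matrix_matrix_mult_def wedge_def matrix_vector_mult_def inner_vec_def
      sum_distrib_left sum_distrib_right sum_subtractf algebra_simps)

lemma so_inner_sym: "so_inner X Y = so_inner Y X"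
  using trace_mul_sym[of X Y] by (simp add: so_inner_def)

lemma so_inner_wedge: "A \<in> so_n \<Longrightarrow> so_inner A (wedge x y) = - ((A *v x) \<bullet> y)"
  using so_n_mult_vec_inner_swap[of A y x]
  by (simp add: so_inner_def trace_mult_wedge inner_commute)

lemma bounded_bilinear_matrix_vector_mult:
  "bounded_bilinear (\<lambda>(A::real^'n^'m) (x::real^'n). A *v x)"
  unfolding bilinear_conv_bounded_bilinear[symmetric] bilinear_def
  by (auto intro!: linearI simp: algebra_simps scaleR_matrix_vector_assoc[symmetric])

lemma grad_eqI:
  assumes "(f has_derivative (\<lambda>w. u \<bullet> w)) (at x)"
  shows "grad f x = u"
  by (simp add: grad_def vec_eq_iff inner_axis frechet_derivative_at[OF assms, symmetric])

lemma inner_const_vector_derivative: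
  assumes "(f has_vector_derivative f') (at t)" "(h has_vector_derivative h') (at t)"
    and "\<forall>s. f s \<bullet> h s = c"
  shows "f' \<bullet> h t + f t \<bullet> h' = 0"
proof -
  have "((\<lambda>s. f s \<bullet> h s) has_derivative (\<lambda>r. f t \<bullet> (r *\<^sub>R h') + (r *\<^sub>R f') \<bullet> h t)) (at t)"
    using assms(1,2) by (intro has_derivative_inner) (simp_all add: has_vector_derivative_def)
  moreover have "((\<lambda>s. f s \<bullet> h s) has_derivative (\<lambda>_. 0)) (at t)"
    using assms(3) by simp
  ultimately have "(\<lambda>r. f t \<bullet> (r *\<^sub>R h') + (r *\<^sub>R f') \<bullet> h t) = (\<lambda>_. 0)"
    by (rule has_derivative_unique)
  from fun_cong[OF this, of 1] show ?thesis
    by (simp add: add.commute)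
qed

lemma sphere_curve_velocity_tangent:
  assumes "\<forall>s. x s \<bullet> x s = 1" "(x has_vector_derivative v) (at t)"
  shows "v \<bullet> x t = 0"
  using inner_const_vector_derivative[OF assms(2) assms(2) assms(1)] by (simp add: inner_commute)

lemma annihilates_orthogonal_iff_parallel:
  assumes "u \<bullet> u = 1"
  shows "(\<forall>d. d \<bullet> u = 0 \<longrightarrow> w \<bullet> d = 0) \<longleftrightarrow> w = (w \<bullet> u) *\<^sub>R u"
proof
  assume "\<forall>d. d \<bullet> u = 0 \<longrightarrow> w \<bullet> d = 0"
  moreover have "(w - (w \<bullet> u) *\<^sub>R u) \<bullet> u = 0"
    using assms by (simp add: inner_diff_left)
  ultimately have "w \<bullet> (w - (w \<bullet> u) *\<^sub>R u) = 0" and "u \<bullet> (w - (w \<bullet> u) *\<^sub>R u) = 0"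
    by (auto simp: inner_commute)
  then have "(w - (w \<bullet> u) *\<^sub>R u) \<bullet> (w - (w \<bullet> u) *\<^sub>R u) = 0"
    by (simp add: inner_diff_left)
  then show "w = (w \<bullet> u) *\<^sub>R u"
    by simp
next
  assume "w = (w \<bullet> u) *\<^sub>R u"
  then show "\<forall>d. d \<bullet> u = 0 \<longrightarrow> w \<bullet> d = 0"
    by (metis inner_commute inner_scaleR_left mult_zero_right)
qed

context
  fixes I :: "real^'n^'n \<Rightarrow> real^'n^'n"
  assumes I: "sym_pos_def_so I"
begin

lemma op_in_so_n: "X \<in> so_n \<Longrightarrow> I X \<in> so_n"
  and op_add: "X \<in> so_n \<Longrightarrow> Y \<in> so_n \<Longrightarrow> I (X + Y) = I X + I Y"
  and op_scaleR: "X \<in> so_n \<Longrightarrow> I (c *\<^sub>R X) = c *\<^sub>R I X"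
  and op_self_adjoint: "X \<in> so_n \<Longrightarrow> Y \<in> so_n \<Longrightarrow> so_inner (I X) Y = so_inner X (I Y)"
  and op_pos: "X \<in> so_n \<Longrightarrow> X \<noteq> 0 \<Longrightarrow> so_inner (I X) X > 0"
  using I unfolding sym_pos_def_so_def by blast+

lemma op_wedge_in_so_n: "I (wedge x y) \<in> so_n"
  by (simp add: op_in_so_n wedge_in_so_n)

lemma bounded_bilinear_op_wedge: "bounded_bilinear (\<lambda>x y. I (wedge x y))"
  unfolding bilinear_conv_bounded_bilinear[symmetric] bilinear_def
  by (auto intro!: linearI simp: wedge_add_left wedge_add_right wedge_scaleR_left
      wedge_scaleR_right op_add op_scaleR wedge_in_so_n)

lemma op_wedge_mult_vec_inner_swap: "(I (wedge x w) *v y) \<bullet> z = (I (wedge y z) *v x) \<bullet> w"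
  using op_self_adjoint[OF wedge_in_so_n wedge_in_so_n, of x w y z]
  by (simp add: so_inner_wedge op_wedge_in_so_n so_inner_sym[of "wedge x w"])

lemma op_wedge_mult_vec_inner_neg:
  assumes "x \<bullet> x = 1" "y \<bullet> x = 0" "y \<noteq> 0"
  shows "(I (wedge x y) *v x) \<bullet> y < 0"
proof -
  have "wedge x y *v x = - y"
    using assms by (simp add: wedge_mult_vec)
  then have "wedge x y \<noteq> 0"
    using assms(3) by auto
  then show ?thesis
    using op_pos[OF wedge_in_so_n] by (simp add: so_inner_wedge op_wedge_in_so_n)
qed

lemma legendre_diff: "legendre I eps x v - legendre I eps x w = legendre I eps x (v - w)"
  by (simp add: legendre_def bounded_bilinear.diff_right[OF bounded_bilinear_op_wedge]
      matrix_vector_mult_diff_rdistrib scaleR_diff_right)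

lemma legendre_inj_on_tangent:
  assumes "x \<bullet> x = 1" "eps \<noteq> 0" "v \<bullet> x = 0" "w \<bullet> x = 0"
    and "legendre I eps x v = legendre I eps x w"
  shows "v = w"
proof (rule ccontr)
  assume "v \<noteq> w"
  then have "(I (wedge x (v - w)) *v x) \<bullet> (v - w) < 0"
    using assms(1,3,4) by (intro op_wedge_mult_vec_inner_neg) (simp_all add: inner_diff_left)
  moreover have "I (wedge x (v - w)) *v x = 0"
    using legendre_diff[of eps x v w] assms(2,5) by (simp add: legendre_def)
  ultimately show False
    by simp
qed

lemma Xgam_legendre:
  assumes "x \<bullet> x = 1" "eps \<noteq> 0" "v \<bullet> x = 0"
  shows "Xgam I eps x (legendre I eps x v) = v"
  unfolding Xgam_def using assms legendre_inj_on_tangent by (intro the_equality) auto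

lemma legendre_inner_base: "legendre I eps x v \<bullet> x = 0"
  by (simp add: legendre_def so_n_mult_vec_inner_self op_wedge_in_so_n)

lemma grad_red_lag_base: "grad (\<lambda>x. red_lag I eps x v) x = (1 / eps^2) *\<^sub>R (I (wedge x v) *v v)"
proof (rule grad_eqI)
  have "((\<lambda>y. I (wedge y v) *v y) has_derivative
      (\<lambda>w. I (wedge x v) *v w + I (wedge w v) *v x)) (at x)"
    using bounded_bilinear.FDERIV[OF bounded_bilinear_matrix_vector_mult
        bounded_linear.has_derivative[OF bounded_bilinear.bounded_linear_left[OF bounded_bilinear_op_wedge]
          has_derivative_ident] has_derivative_ident] .
  then have "((\<lambda>y. - (1 / (2 * eps^2)) * ((I (wedge y v) *v y) \<bullet> v)) has_derivative
      (\<lambda>w. - (1 / (2 * eps^2)) * ((I (wedge x v) *v w + I (wedge w v) *v x) \<bullet> v))) (at x)"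
    by (intro has_derivative_mult_right bounded_linear.has_derivative[OF bounded_linear_inner_left])
  moreover have "(I (wedge x v) *v w + I (wedge w v) *v x) \<bullet> v = - 2 * ((I (wedge x v) *v v) \<bullet> w)"
    for w
    using op_wedge_mult_vec_inner_swap[of w v x v] so_n_mult_vec_inner_swap[OF op_wedge_in_so_n, of x v w v]
    by (simp add: inner_add_left)
  ultimately show "((\<lambda>x. red_lag I eps x v) has_derivative
      (\<lambda>w. ((1 / eps^2) *\<^sub>R (I (wedge x v) *v v)) \<bullet> w)) (at x)"
    unfolding red_lag_def by simp
qed

lemma grad_red_lag_velocity: "grad (\<lambda>v. red_lag I eps x v) v = legendre I eps x v"
proof (rule grad_eqI)
  have "((\<lambda>y. I (wedge x y) *v x) has_derivative (\<lambda>w. I (wedge x w) *v x)) (at v)"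
    using bounded_bilinear.FDERIV[OF bounded_bilinear_matrix_vector_mult
        bounded_linear.has_derivative[OF bounded_bilinear.bounded_linear_right[OF bounded_bilinear_op_wedge]
          has_derivative_ident] has_derivative_const] by simp
  then have "((\<lambda>y. - (1 / (2 * eps^2)) * ((I (wedge x y) *v x) \<bullet> y)) has_derivative
      (\<lambda>w. - (1 / (2 * eps^2)) * ((I (wedge x v) *v x) \<bullet> w + (I (wedge x w) *v x) \<bullet> v))) (at v)"
    by (intro has_derivative_mult_right has_derivative_inner has_derivative_ident)
  moreover have "(I (wedge x w) *v x) \<bullet> v = (I (wedge x v) *v x) \<bullet> w" for w
    using op_wedge_mult_vec_inner_swap[of x w x v] by simp
  ultimately show "((\<lambda>v. red_lag I eps x v) has_derivative (\<lambda>w. legendre I eps x v \<bullet> w)) (at v)"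
    unfolding red_lag_def legendre_def by simp
qed

lemma legendre_along_curve_differentiable:
  assumes "(x has_vector_derivative x') (at t)" "(v has_vector_derivative v') (at t)"
  shows "(\<lambda>s. legendre I eps (x s) (v s)) differentiable (at t)"
proof -
  have "(x has_derivative (\<lambda>h. h *\<^sub>R x')) (at t)" "(v has_derivative (\<lambda>h. h *\<^sub>R v')) (at t)"
    using assms by (simp_all add: has_vector_derivative_def)
  note d = bounded_bilinear.FDERIV[OF bounded_bilinear_matrix_vector_mult
      bounded_bilinear.FDERIV[OF bounded_bilinear_op_wedge this] this(1)]
  show ?thesis
    unfolding legendre_def by (rule differentiableI has_derivative_scaleR_right d)+
qed

lemma legendre_along_curve_derivative_inner_base:
  assumes "(x has_vector_derivative x' t) (at t)" "(x' has_vector_derivative x'') (at t)"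
  shows "vector_derivative (\<lambda>s. legendre I eps (x s) (x' s)) (at t) \<bullet> x t
    = - (legendre I eps (x t) (x' t) \<bullet> x' t)"
proof -
  have "((\<lambda>s. legendre I eps (x s) (x' s)) has_vector_derivative
      vector_derivative (\<lambda>s. legendre I eps (x s) (x' s)) (at t)) (at t)"
    using legendre_along_curve_differentiable[OF assms] by (simp add: vector_derivative_works)
  from inner_const_vector_derivative[OF this assms(1)] show ?thesis
    by (simp add: legendre_inner_base)
qed

lemma euler_lagrange_residual:
  assumes "kappa \<in> so_n"
  shows "delta_l I eps x v t dg - JK I eps (x t) (v t) dg - force kappa eps (v t) dg
    = (((1 - eps) / eps^3) *\<^sub>R (I (wedge (x t) (v t)) *v v t) + (1 / eps^2) *\<^sub>R (kappa *v v t)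
       - vector_derivative (\<lambda>s. legendre I eps (x s) (v s)) (at t)) \<bullet> dg"
proof -
  define P' where "P' = vector_derivative (\<lambda>s. legendre I eps (x s) (v s)) (at t)"
  define E where "E = (I (wedge (x t) (v t)) *v v t) \<bullet> dg"
  define K where "K = (kappa *v v t) \<bullet> dg"
  have "v t \<bullet> (kappa *v dg) = - K"
    using so_n_mult_vec_inner_swap[OF assms, of dg "v t"] by (simp add: K_def inner_commute)
  then have "delta_l I eps x v t dg - JK I eps (x t) (v t) dg - force kappa eps (v t) dg
      = (1 / eps^2 - (2 * eps - 1) / eps^3) * E + (1 / eps^2) * K - P' \<bullet> dg"
    unfolding delta_l_def grad_red_lag_base grad_red_lag_velocity JK_def force_def P'_def E_def
    by (simp add: inner_diff_left left_diff_distrib)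
  moreover have "1 / eps^2 - (2 * eps - 1) / eps^3 = (1 - eps) / eps^3"
    by (cases "eps = 0") (simp_all add: field_simps power3_eq_cube power2_eq_square)
  moreover have "(((1 - eps) / eps^3) *\<^sub>R (I (wedge (x t) (v t)) *v v t) + (1 / eps^2) *\<^sub>R (kappa *v v t)
       - P') \<bullet> dg = ((1 - eps) / eps^3) * E + (1 / eps^2) * K - P' \<bullet> dg"
    by (simp add: E_def K_def inner_diff_left inner_add_left)
  ultimately show ?thesis
    unfolding P'_def by (simp only:)
qed

lemma euler_lagrange_residual_inner_base:
  assumes "kappa \<in> so_n" "x \<bullet> x = 1" "eps \<noteq> 0" "v \<bullet> x = 0"
    and "P' \<bullet> x = - (legendre I eps x v \<bullet> v)"
  shows "(((1 - eps) / eps^3) *\<^sub>R (I (wedge x v) *v v) + (1 / eps^2) *\<^sub>R (kappa *v v) - P') \<bullet> x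
    = - (((eps - 1) / eps^3) * ((I (wedge x v) *v v) \<bullet> x)
         - 2 * ham I eps x (legendre I eps x v) + (1 / eps^2) * (v \<bullet> (kappa *v x)))"
proof -
  have "(kappa *v v) \<bullet> x = - (v \<bullet> (kappa *v x))"
    using so_n_mult_vec_inner_swap[OF assms(1), of v x] by (simp add: inner_commute)
  moreover have "ham I eps x (legendre I eps x v) = (1 / 2) * (legendre I eps x v \<bullet> v)"
    using Xgam_legendre[OF assms(2-4)] by (simp add: ham_def inner_commute)
  ultimately show ?thesis
    using assms(3,5) by (simp add: inner_diff_left inner_add_left field_simps)
qed

end

theorem proposition7p6:
  fixes a b m eps :: real
    and II :: "real^'n^'n \<Rightarrow> real^'n^'n"
    and kappa :: "real^'n^'n"
    and g g' g'' :: "real \<Rightarrow> real^'n"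
  defines "Ib \<equiv> (\<lambda>X. II X + (m * a^2) *\<^sub>R X)"
  defines "p \<equiv> (\<lambda>s. legendre Ib eps (g s) (g' s))"
  assumes n3: "CARD('n) \<ge> 3"
    and a: "a > 0" and b: "b > 0" and m: "m > 0"
    and eps: "eps = b / (b + a) \<or> (b \<noteq> a \<and> eps = b / (b - a))"
    and Ib: "sym_pos_def_so Ib"
    and kappa: "kappa \<in> so_n"
    and sphere: "\<forall>s. norm (g s) = 1"
    and d1: "\<forall>s. (g has_vector_derivative g' s) (at s)"
    and d2: "\<forall>s. (g' has_vector_derivative g'' s) (at s)"
  shows "(\<forall>dg. dg \<bullet> g t = 0 \<longrightarrow>
            delta_l Ib eps g g' t dg - JK Ib eps (g t) (g' t) dg = force kappa eps (g' t) dg)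
       \<longleftrightarrow>
         (let X = Xgam Ib eps (g t) (p t);
              mu = ((eps - 1) / eps^3) * ((Ib (wedge (g t) X) *v X) \<bullet> g t)
                   - 2 * ham Ib eps (g t) (p t) + (1 / eps^2) * (X \<bullet> (kappa *v g t))
          in g' t = X \<and>
             vector_derivative p (at t) =
               ((1 - eps) / eps^3) *\<^sub>R (Ib (wedge (g t) X) *v X)
               + (1 / eps^2) *\<^sub>R (kappa *v X) + mu *\<^sub>R g t)"
proof -
  have eps0: "eps \<noteq> 0"
    using eps a b by auto
  have unit: "\<forall>s. g s \<bullet> g s = 1"
    using sphere by (simp add: dot_square_norm)
  have tangent: "g' t \<bullet> g t = 0"
    using sphere_curve_velocity_tangent[OF unit d1[rule_format]] .
  have X: "Xgam Ib eps (g t) (p t) = g' t"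
    unfolding p_def using Xgam_legendre[OF Ib unit[rule_format] eps0 tangent] .
  define P' where "P' = vector_derivative p (at t)"
  have P'_normal: "P' \<bullet> g t = - (p t \<bullet> g' t)"
    unfolding P'_def p_def
    using legendre_along_curve_derivative_inner_base[OF Ib d1[rule_format] d2[rule_format]] .
  define C where "C = ((1 - eps) / eps^3) *\<^sub>R (Ib (wedge (g t) (g' t)) *v g' t)
    + (1 / eps^2) *\<^sub>R (kappa *v g' t)"
  define mu where "mu = ((eps - 1) / eps^3) * ((Ib (wedge (g t) (g' t)) *v g' t) \<bullet> g t)
    - 2 * ham Ib eps (g t) (p t) + (1 / eps^2) * (g' t \<bullet> (kappa *v g t))"
  have residual: "delta_l Ib eps g g' t dg - JK Ib eps (g t) (g' t) dg = force kappa eps (g' t) dg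
      \<longleftrightarrow> (C - P') \<bullet> dg = 0" for dg
    using euler_lagrange_residual[OF Ib kappa, of eps g g' t dg]
    unfolding C_def P'_def p_def by linarith
  have normal: "(C - P') \<bullet> g t = - mu"
    unfolding C_def mu_def using P'_normal unfolding p_def
    by (rule euler_lagrange_residual_inner_base[OF Ib kappa unit[rule_format] eps0 tangent])
  have "(\<forall>dg. dg \<bullet> g t = 0 \<longrightarrow>
      delta_l Ib eps g g' t dg - JK Ib eps (g t) (g' t) dg = force kappa eps (g' t) dg)
      \<longleftrightarrow> C - P' = ((C - P') \<bullet> g t) *\<^sub>R g t"
    using annihilates_orthogonal_iff_parallel[OF unit[rule_format, of t]] residual by simp
  also have "\<dots> \<longleftrightarrow> P' = C + mu *\<^sub>R g t"
    unfolding normal by (auto simp: algebra_simps)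
  finally show ?thesis
    unfolding Let_def X C_def[symmetric] mu_def[symmetric] P'_def[symmetric] by simp
qed

end
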